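(* Let $A\in\mathbb{R}^{n\times n}$ and $b\in\mathbb{R}^n$. Suppose that $A$ satisfies either (a) $A-I$ is an $M$-matrix, or (b) $\mathcal{N}(A^\top-I)=\mathrm{span}(v)$ for some vector $v>0$, and $A-I+D$ is an $M$-matrix for every diagonal matrix $D=\mathrm{diag}(d)$ with $d\ge 0$ and $d\neq 0$. If $A$ satisfies (b), assume in addition that $v^\top b<0$. Then the absolute value equation $Ax-|x|-b=0$ has a solution $x\in\mathbb{R}^n$, and this solution is unique.
   Context: For $x\in\mathbb{R}^n$, $|x|=(|x_1|,\dots,|x_n|)^\top$. A matrix is a $Z$-matrix if all its off-diagonal entries are $\le 0$; a $Z$-matrix $A$ is an $M$-matrix if $A$ is nonsingular and $A^{-1}\ge 0$ (entrywise). Vector inequalities are entrywise; $v>0$ means all entries of $v$ are strictly positive. $\mathcal{N}(X)$ denotes the null space of $X$. *)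

theory Defs
  imports "HOL-Analysis.Analysis"
begin

definition vabs :: "real^'n \<Rightarrow> real^'n" where
  "vabs x = (\<chi> i. \<bar>x $ i\<bar>)"

definition Z_matrix :: "real^'n^'n \<Rightarrow> bool" where
  "Z_matrix A \<longleftrightarrow> (\<forall>i j. i \<noteq> j \<longrightarrow> A $ i $ j \<le> 0)"

definition M_matrix :: "real^'n^'n \<Rightarrow> bool" where
  "M_matrix A \<longleftrightarrow> Z_matrix A \<and> invertible A \<and> (\<forall>i j. matrix_inv A $ i $ j \<ge> 0)"

definition diag_mat :: "real^'n \<Rightarrow> real^'n^'n" where
  "diag_mat d = (\<chi> i j. if i = j then d $ i else 0)"

definition null_space :: "real^'n^'n \<Rightarrow> (real^'n) set" where
  "null_space X = {x. X *v x = 0}"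

end

theory Submission
  imports Defs
begin

(* Since |x| = 2 x^+ - x, the equation A x - |x| = b says (A + I) x = b + x + |x|.
   If A + I is monotone (M z >= 0 implies z >= 0), the map x |-> (A + I)^-1 (b + x + |x|)
   sends the order interval [min((A + I)^-1 b, 0), h] into itself whenever h >= 0 and
   (A - I) h >= b, so Brouwer's theorem gives a solution. In case (a) such an h is
   (A - I)^-1 |b|. In case (b) it is w + K a, where (A - I) w = b - alpha v with
   alpha = v.b / v.v < 0, and a > 0 is a kernel vector of A - I: |y| is one for every
   nonzero kernel vector y, and it cannot vanish anywhere.
   For two solutions x and y, the difference quotients of |.| give a diagonal d >= 0 with
   (A - I + diag d)(x - y) = 0. This matrix is invertible in case (a), and in case (b) unless
   d = 0; but d = 0 would make x a nonnegative solution of (A - I) x = b, impossible since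
   v.(A - I) = 0 and v.b < 0. *)

lemma matrix_inv_mult:
  fixes M :: "real^'n^'n"
  assumes "invertible M"
  shows "M ** matrix_inv M = mat 1" "matrix_inv M ** M = mat 1"
proof -
  have "\<exists>M'. M ** M' = mat 1 \<and> M' ** M = mat 1"
    using assms by (simp add: invertible_def)
  then have "M ** matrix_inv M = mat 1 \<and> matrix_inv M ** M = mat 1"
    unfolding matrix_inv_def by (rule someI_ex)
  then show "M ** matrix_inv M = mat 1" "matrix_inv M ** M = mat 1"
    by auto
qed

lemma matrix_inv_mult_vec:
  fixes M :: "real^'n^'n"
  assumes "invertible M"
  shows "M *v (matrix_inv M *v z) = z" "matrix_inv M *v (M *v z) = z"
  using matrix_inv_mult[OF assms] by (simp_all add: matrix_vector_mul_assoc)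

lemma invertible_iff_kernel_trivial:
  fixes M :: "real^'n^'n"
  shows "invertible M \<longleftrightarrow> (\<forall>z. M *v z = 0 \<longrightarrow> z = 0)"
  by (simp add: invertible_left_inverse matrix_left_invertible_ker)

lemma diag_mat_mult_vec: "diag_mat d *v x = (\<chi> i. d $ i * x $ i)"
  by (simp add: vec_eq_iff matrix_vector_mult_def diag_mat_def if_distrib[of "\<lambda>t. t * _"] cong: if_cong)

lemma diag_mat_const: "diag_mat (\<chi> i. c) = mat c"
  by (simp add: vec_eq_iff diag_mat_def mat_def)

lemma mat_mult_vec: "mat c *v x = c *\<^sub>R x"
  by (simp add: vec_eq_iff matrix_vector_mult_def mat_def if_distrib[of "\<lambda>t. t * _"] cong: if_cong)

lemma add_mat_one_eq_diag_shift:
  fixes A :: "real^'n^'n"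
  shows "A + mat 1 = A - mat 1 + diag_mat (\<chi> i. 2)"
  by (simp add: vec_eq_iff diag_mat_def mat_def)

lemma Z_matrix_add_diag_mat: "Z_matrix (B + diag_mat d) \<longleftrightarrow> Z_matrix B"
  by (simp add: Z_matrix_def diag_mat_def)

lemma inner_mult_vec_left_null:
  fixes B :: "real^'n^'m"
  assumes "transpose B *v v = 0"
  shows "v \<bullet> (B *v z) = 0"
  using dot_lmul_matrix[of v B z] assms by simp

lemma in_range_if_orthogonal_null_space_transpose:
  fixes B :: "real^'n^'n"
  assumes "\<forall>z \<in> null_space (transpose B). z \<bullet> u = 0"
  shows "\<exists>w. B *v w = u"
proof -
  obtain r e where r: "r \<in> span (range ((*v) B))"
    and e: "\<And>w. w \<in> span (range ((*v) B)) \<Longrightarrow> orthogonal e w" and u: "u = r + e"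
    using orthogonal_subspace_decomp_exists by blast
  have "r \<in> range ((*v) B)"
    using r by (simp add: span_linear_image[OF matrix_vector_mul_linear])
  then obtain w where w: "r = B *v w"
    by blast
  have "e \<bullet> (B *v (transpose B *v e)) = 0"
    using e[of "B *v (transpose B *v e)"] by (simp add: span_base orthogonal_def)
  then have "(transpose B *v e) \<bullet> (transpose B *v e) = 0"
    using dot_lmul_matrix[of e B "transpose B *v e"] by simp
  then have "e \<in> null_space (transpose B)"
    by (simp add: null_space_def)
  then have "e \<bullet> u = 0"
    using assms by blast
  then have "e \<bullet> e = 0"
    using e[of r] r u by (simp add: orthogonal_def inner_add_right)
  then show ?thesis
    using u w by auto
qed

lemma vabs_nonneg: "0 \<le> vabs x"
  by (simp add: less_eq_vec_def vabs_def)

lemma add_vabs_nonneg: "0 \<le> x + vabs x"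
  unfolding less_eq_vec_def vabs_def by auto

lemma add_vabs_le:
  assumes "x \<le> h" and "0 \<le> h"
  shows "x + vabs x \<le> 2 *\<^sub>R h"
  unfolding less_eq_vec_def
proof
  fix i
  have "x $ i \<le> h $ i" and "0 \<le> h $ i"
    using assms by (simp_all add: less_eq_vec_def)
  then show "(x + vabs x) $ i \<le> (2 *\<^sub>R h) $ i"
    by (cases "0 \<le> x $ i") (simp_all add: vabs_def)
qed

lemma vabs_scaleR: "0 \<le> s \<Longrightarrow> vabs (s *\<^sub>R x) = s *\<^sub>R vabs x"
  by (simp add: vec_eq_iff vabs_def abs_mult)

lemma continuous_on_vabs: "continuous_on S vabs"
  unfolding vabs_def by (intro continuous_intros)

lemma nonneg_matrix_mult_vec_nonneg:
  fixes P :: "real^'n^'m"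
  assumes "\<forall>i j. 0 \<le> P $ i $ j" and "0 \<le> x"
  shows "0 \<le> P *v x"
  using assms by (auto simp: less_eq_vec_def matrix_vector_mult_def intro!: sum_nonneg)

lemma vabs_nonneg_matrix_mult_vec_le:
  fixes P :: "real^'n^'m"
  assumes "\<forall>i j. 0 \<le> P $ i $ j"
  shows "vabs (P *v x) \<le> P *v vabs x"
  unfolding less_eq_vec_def
proof
  fix i
  have "\<bar>\<Sum>j\<in>UNIV. P $ i $ j * x $ j\<bar> \<le> (\<Sum>j\<in>UNIV. \<bar>P $ i $ j * x $ j\<bar>)"
    by (rule sum_abs)
  also have "\<dots> = (\<Sum>j\<in>UNIV. P $ i $ j * \<bar>x $ j\<bar>)"
    using assms by (simp add: abs_mult)
  finally show "vabs (P *v x) $ i \<le> (P *v vabs x) $ i"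
    by (simp add: vabs_def matrix_vector_mult_def)
qed

lemma positive_inner_nonneg_eq_0:
  fixes v q :: "real^'n"
  assumes "\<forall>i. 0 < v $ i" and "0 \<le> q" and "v \<bullet> q = 0"
  shows "q = 0"
proof -
  have "\<forall>i\<in>UNIV. v $ i * q $ i = 0"
    using assms by (subst sum_nonneg_eq_0_iff[symmetric])
      (auto simp: inner_vec_def less_eq_vec_def less_imp_le)
  then have "q $ i = 0" for i
    using assms(1)[rule_format, of i] by (metis UNIV_I mult_eq_0_iff less_irrefl)
  then show ?thesis
    by (simp add: vec_eq_iff)
qed

lemma positive_vector_dominates:
  fixes a w :: "real^'n"
  assumes "\<forall>i. 0 < a $ i"
  obtains K where "0 \<le> w + K *\<^sub>R a"
proof
  define K where "K = (\<Sum>j\<in>UNIV. \<bar>w $ j\<bar> / a $ j)"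
  have "0 \<le> w $ i + K * a $ i" for i
  proof -
    have "\<bar>w $ i\<bar> / a $ i \<le> K"
      unfolding K_def by (rule member_le_sum) (use assms in \<open>auto intro: divide_nonneg_pos\<close>)
    then have "\<bar>w $ i\<bar> \<le> K * a $ i"
      using assms by (simp add: divide_le_eq)
    then show ?thesis
      using abs_ge_minus_self[of "w $ i"] by linarith
  qed
  then show "0 \<le> w + K *\<^sub>R a"
    by (simp add: less_eq_vec_def)
qed

definition monotone_matrix :: "real^'n^'n \<Rightarrow> bool" where
  "monotone_matrix M \<longleftrightarrow> (\<forall>z. 0 \<le> M *v z \<longrightarrow> 0 \<le> z)"

lemma monotone_matrix_invertible:
  assumes "monotone_matrix M"
  shows "invertible M"
  unfolding invertible_iff_kernel_trivial
proof (intro allI impI)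
  fix z
  assume "M *v z = 0"
  then have "0 \<le> z"
    using assms by (simp add: monotone_matrix_def)
  moreover have "0 \<le> - z"
    using assms[unfolded monotone_matrix_def, rule_format, of "- z"] \<open>M *v z = 0\<close>
    by (simp add: vec.neg)
  ultimately show "z = 0"
    by (auto simp: less_eq_vec_def vec_eq_iff intro: order_antisym)
qed

lemma monotone_matrix_le:
  assumes "monotone_matrix M" and "M *v x \<le> M *v y"
  shows "x \<le> y"
proof -
  have "0 \<le> M *v (y - x)"
    using assms(2) by (simp add: matrix_vector_mult_diff_distrib)
  then have "0 \<le> y - x"
    using assms(1) unfolding monotone_matrix_def by blast
  then show ?thesis
    by simp
qed

lemma M_matrix_imp_monotone_matrix:
  assumes "M_matrix M"
  shows "monotone_matrix M"
  unfolding monotone_matrix_def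
proof (intro allI impI)
  fix z
  assume "0 \<le> M *v z"
  moreover have "invertible M" and "\<forall>i j. 0 \<le> matrix_inv M $ i $ j"
    using assms by (simp_all add: M_matrix_def)
  ultimately show "0 \<le> z"
    using nonneg_matrix_mult_vec_nonneg matrix_inv_mult_vec(2) by metis
qed

lemma Z_matrix_mult_vec_row_le:
  assumes Z: "Z_matrix M" and z_ge: "\<forall>j. t * u $ j \<le> z $ j" and z_i: "z $ i = t * u $ i"
  shows "(M *v z) $ i \<le> t * (M *v u) $ i"
proof -
  have "(M *v z) $ i = (\<Sum>j\<in>UNIV. M $ i $ j * z $ j)"
    by (simp add: matrix_vector_mult_def)
  also have "\<dots> \<le> (\<Sum>j\<in>UNIV. M $ i $ j * (t * u $ j))"
  proof (rule sum_mono)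
    fix j
    show "M $ i $ j * z $ j \<le> M $ i $ j * (t * u $ j)"
    proof (cases "j = i")
      case True
      then show ?thesis
        using z_i by simp
    next
      case False
      then show ?thesis
        using Z z_ge by (simp add: Z_matrix_def mult_left_mono_neg)
    qed
  qed
  also have "\<dots> = t * (M *v u) $ i"
    by (simp add: matrix_vector_mult_def sum_distrib_left algebra_simps)
  finally show ?thesis .
qed

lemma Z_matrix_semipositive_imp_monotone_matrix:
  assumes Z: "Z_matrix M" and u_pos: "\<forall>i. 0 < u $ i" and Mu_pos: "\<forall>i. 0 < (M *v u) $ i"
  shows "monotone_matrix M"
  unfolding monotone_matrix_def
proof (intro allI impI)
  fix z
  assume Mz: "0 \<le> M *v z"
  \<comment> \<open>t is the largest multiple of u below z; it is attained at some index i\<close>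
  define t where "t = Min (range (\<lambda>j. z $ j / u $ j))"
  have "t \<in> range (\<lambda>j. z $ j / u $ j)"
    unfolding t_def by (rule Min_in) auto
  then obtain i where "t = z $ i / u $ i"
    by blast
  then have z_i: "z $ i = t * u $ i"
    using u_pos[rule_format, of i] by simp
  have z_ge: "\<forall>j. t * u $ j \<le> z $ j"
  proof
    fix j
    have "t \<le> z $ j / u $ j"
      unfolding t_def by (rule Min_le) auto
    then show "t * u $ j \<le> z $ j"
      using u_pos by (simp add: pos_le_divide_eq)
  qed
  have "0 \<le> t"
  proof (rule ccontr)
    assume "\<not> 0 \<le> t"
    then have "t * (M *v u) $ i < 0"
      using Mu_pos by (simp add: mult_neg_pos)
    moreover have "0 \<le> (M *v z) $ i"
      using Mz by (simp add: less_eq_vec_def)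
    ultimately show False
      using Z_matrix_mult_vec_row_le[OF Z z_ge z_i] by simp
  qed
  then show "0 \<le> z"
    using z_ge u_pos by (simp add: less_eq_vec_def) (meson mult_nonneg_nonneg less_imp_le order_trans)
qed

lemma M_matrix_inverse_row_sum_pos:
  assumes "M_matrix B"
  shows "0 < (matrix_inv B *v (\<chi> j. 1)) $ i"
proof -
  have B_inv: "invertible B" and P_nonneg: "\<forall>i j. 0 \<le> matrix_inv B $ i $ j"
    using assms by (simp_all add: M_matrix_def)
  have row_sum: "(matrix_inv B *v (\<chi> j. 1)) $ i = (\<Sum>j\<in>UNIV. matrix_inv B $ i $ j)"
    by (simp add: matrix_vector_mult_def)
  show ?thesis
  proof (rule ccontr)
    assume "\<not> ?thesis"
    then have "(\<Sum>j\<in>UNIV. matrix_inv B $ i $ j) = 0"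
      using row_sum P_nonneg sum_nonneg[of UNIV "\<lambda>j. matrix_inv B $ i $ j"] by simp
    then have "\<forall>j. matrix_inv B $ i $ j = 0"
      using P_nonneg by (simp add: sum_nonneg_eq_0_iff)
    then have "(matrix_inv B ** B) $ i $ i = 0"
      by (simp add: matrix_matrix_mult_def)
    then show False
      using matrix_inv_mult(2)[OF B_inv] by (simp add: mat_def)
  qed
qed

lemma M_matrix_add_diag_mat_monotone:
  assumes "M_matrix B" and "0 \<le> d"
  shows "monotone_matrix (B + diag_mat d)"
proof (rule Z_matrix_semipositive_imp_monotone_matrix)
  define u where "u = matrix_inv B *v (\<chi> j. 1)"
  show "Z_matrix (B + diag_mat d)"
    using assms(1) by (simp add: M_matrix_def Z_matrix_add_diag_mat)
  show u_pos: "\<forall>i. 0 < u $ i"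
    unfolding u_def using M_matrix_inverse_row_sum_pos[OF assms(1)] by blast
  have "B *v u = (\<chi> j. 1)"
    unfolding u_def using assms(1) by (simp add: M_matrix_def matrix_inv_mult_vec)
  then have "(B + diag_mat d) *v u = (\<chi> i. 1 + d $ i * u $ i)"
    by (simp add: matrix_vector_mult_add_rdistrib diag_mat_mult_vec vec_eq_iff)
  then show "\<forall>i. 0 < ((B + diag_mat d) *v u) $ i"
    using assms(2) u_pos by (simp add: less_eq_vec_def add_pos_nonneg less_imp_le)
qed

lemma vabs_mem_kernel:
  fixes B :: "real^'n^'n"
  assumes M: "M_matrix (B + mat s)" and s_pos: "0 < s"
    and v_pos: "\<forall>i. 0 < v $ i" and v_left_null: "transpose B *v v = 0"
    and y: "B *v y = 0"
  shows "B *v vabs y = 0"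
proof -
  define N where "N = B + mat s"
  define P where "P = matrix_inv N"
  have N_inv: "invertible N" and P_nonneg: "\<forall>i j. 0 \<le> P $ i $ j"
    using M by (simp_all add: M_matrix_def N_def P_def)
  have N_mult: "N *v z = B *v z + s *\<^sub>R z" for z
    by (simp add: N_def matrix_vector_mult_add_rdistrib mat_mult_vec)
  have "y = P *v (s *\<^sub>R y)"
    using matrix_inv_mult_vec(2)[OF N_inv, of y] by (simp add: P_def N_mult y)
  then have "vabs y \<le> P *v (s *\<^sub>R vabs y)"
    using vabs_nonneg_matrix_mult_vec_le[OF P_nonneg, of "s *\<^sub>R y"] s_pos
    by (simp add: vabs_scaleR)
  \<comment> \<open>v is a left eigenvector of N for s, hence of P for 1/s\<close>
  moreover have "v \<bullet> (P *v z) = v \<bullet> z / s" for z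
  proof -
    have "v \<bullet> z = v \<bullet> (N *v (P *v z))"
      by (simp add: P_def matrix_inv_mult_vec(1)[OF N_inv])
    also have "\<dots> = s * (v \<bullet> (P *v z))"
      by (simp add: N_mult inner_add_right inner_mult_vec_left_null[OF v_left_null])
    finally show ?thesis
      using s_pos by simp
  qed
  then have "v \<bullet> (P *v (s *\<^sub>R vabs y) - vabs y) = 0"
    using s_pos by (simp add: inner_diff_right)
  ultimately have "P *v (s *\<^sub>R vabs y) - vabs y = 0"
    by (intro positive_inner_nonneg_eq_0[OF v_pos]) simp_all
  then have "N *v vabs y = s *\<^sub>R vabs y"
    using matrix_inv_mult_vec(1)[OF N_inv] by (metis P_def eq_iff_diff_eq_0)
  then show ?thesis
    by (simp add: N_mult)
qed

lemma kernel_nonneg_vector_positive: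
  fixes B :: "real^'n^'n"
  assumes inv: "\<forall>d. 0 \<le> d \<and> d \<noteq> 0 \<longrightarrow> invertible (B + diag_mat d)"
    and "0 \<le> a" and "a \<noteq> 0" and "B *v a = 0"
  shows "0 < a $ i"
proof (rule ccontr)
  assume "\<not> 0 < a $ i"
  moreover have "0 \<le> a $ i"
    using \<open>0 \<le> a\<close> by (simp add: less_eq_vec_def)
  ultimately have "a $ i = 0"
    by simp
  \<comment> \<open>a diagonal perturbation supported on the zeros of a leaves a in the kernel\<close>
  define d :: "real^'n" where "d = (\<chi> j. if a $ j = 0 then 1 else 0)"
  have "0 \<le> d"
    by (simp add: d_def less_eq_vec_def)
  moreover have "d \<noteq> 0"
  proof
    assume "d = 0"
    then have "d $ i = 0"
      by simp
    then show False
      using \<open>a $ i = 0\<close> by (simp add: d_def)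
  qed
  ultimately have "invertible (B + diag_mat d)"
    using inv by blast
  moreover have "(B + diag_mat d) *v a = 0"
    using \<open>B *v a = 0\<close> by (simp add: matrix_vector_mult_add_rdistrib diag_mat_mult_vec vec_eq_iff d_def)
  ultimately show False
    using \<open>a \<noteq> 0\<close> invertible_iff_kernel_trivial by blast
qed

lemma positive_kernel_vector:
  fixes B :: "real^'n^'n"
  assumes v_pos: "\<forall>i. 0 < v $ i" and v_left_null: "transpose B *v v = 0"
    and shifts: "\<forall>d. 0 \<le> d \<and> d \<noteq> 0 \<longrightarrow> M_matrix (B + diag_mat d)"
  obtains a where "\<forall>i. 0 < a $ i" and "B *v a = 0"
proof -
  have "v \<noteq> 0"
    using v_pos by (metis less_irrefl zero_index)
  then have "\<not> invertible (transpose B)"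
    using v_left_null by (auto simp: invertible_iff_kernel_trivial)
  then have "\<not> invertible B"
    using transpose_invertible by blast
  then obtain y where "B *v y = 0" and "y \<noteq> 0"
    by (auto simp: invertible_iff_kernel_trivial)
  have "M_matrix (B + mat 2)"
    using shifts[rule_format, of "\<chi> i. 2"] by (simp add: diag_mat_const vec_eq_iff less_eq_vec_def)
  then have "B *v vabs y = 0"
    using vabs_mem_kernel[OF _ _ v_pos v_left_null \<open>B *v y = 0\<close>, of 2] by simp
  moreover have "vabs y \<noteq> 0"
    using \<open>y \<noteq> 0\<close> by (simp add: vabs_def vec_eq_iff)
  moreover have "\<forall>d. 0 \<le> d \<and> d \<noteq> 0 \<longrightarrow> invertible (B + diag_mat d)"
    using shifts by (simp add: M_matrix_def)
  ultimately have "\<forall>i. 0 < vabs y $ i"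
    using kernel_nonneg_vector_positive vabs_nonneg by blast
  then show thesis
    using that \<open>B *v vabs y = 0\<close> by blast
qed

lemma ave_iff_fixed_point:
  fixes A :: "real^'n^'n"
  shows "A *v x - vabs x = b \<longleftrightarrow> (A + mat 1) *v x = b + x + vabs x"
  by (auto simp: matrix_vector_mult_add_rdistrib algebra_simps)

lemma ave_exists_of_supersolution:
  fixes A :: "real^'n^'n"
  assumes mono: "monotone_matrix (A + mat 1)"
    and h_nonneg: "0 \<le> h" and h_super: "b \<le> (A - mat 1) *v h"
  shows "\<exists>x. A *v x - vabs x = b"
proof -
  define M where "M = A + mat 1"
  have mono_M: "monotone_matrix M"
    unfolding M_def by (rule mono)
  then have M_inv: "invertible M"
    by (rule monotone_matrix_invertible)
  define T where "T x = matrix_inv M *v (b + x + vabs x)" for x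
  define c where "c = matrix_inv M *v b"
  define l :: "real^'n" where "l = (\<chi> i. min (c $ i) 0)"
  have M_T: "M *v T x = b + x + vabs x" for x
    unfolding T_def using matrix_inv_mult_vec(1)[OF M_inv] .
  have M_c: "M *v c = b"
    unfolding c_def using matrix_inv_mult_vec(1)[OF M_inv] .
  have T_maps: "T x \<in> {l..h}" if "x \<in> {l..h}" for x
  proof -
    have "M *v c \<le> M *v T x"
      using add_vabs_nonneg[of x] by (simp add: M_T M_c add.assoc)
    then have "c \<le> T x"
      by (rule monotone_matrix_le[OF mono_M])
    then have "l \<le> T x"
      by (simp add: l_def less_eq_vec_def min.coboundedI1)
    have "M *v T x = b + (x + vabs x)"
      by (simp add: M_T add.assoc)
    also have "\<dots> \<le> (A - mat 1) *v h + 2 *\<^sub>R h"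
      using h_super add_vabs_le[of x h] that h_nonneg by (intro add_mono) simp_all
    also have "\<dots> = M *v h"
      by (simp add: M_def matrix_vector_mult_add_rdistrib matrix_vector_mult_diff_rdistrib scaleR_2)
    finally have "T x \<le> h"
      by (rule monotone_matrix_le[OF mono_M])
    with \<open>l \<le> T x\<close> show ?thesis
      by simp
  qed
  have "0 \<in> {l..h}"
    using h_nonneg by (simp add: l_def less_eq_vec_def)
  moreover have "continuous_on {l..h} T"
    unfolding T_def
    by (intro bounded_linear.continuous_on[OF matrix_vector_mul_bounded_linear]
        continuous_intros continuous_on_vabs)
  ultimately obtain x where "T x = x"
    using brouwer[OF compact_cbox convex_box(1), of l h T] T_maps
    unfolding interval_cbox_cart by blast
  then have "M *v x = b + x + vabs x"
    using M_T by metis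
  then show ?thesis
    unfolding M_def ave_iff_fixed_point by blast
qed

lemma abs_difference_quotient_le_1:
  fixes s t :: real
  assumes "s \<noteq> t"
  shows "(\<bar>s\<bar> - \<bar>t\<bar>) / (s - t) \<le> 1"
proof -
  have "\<bar>(\<bar>s\<bar> - \<bar>t\<bar>) / (s - t)\<bar> \<le> 1"
    using assms abs_triangle_ineq3[of s t] by (simp add: abs_divide divide_le_eq_1)
  then show ?thesis
    by (rule abs_le_D1)
qed

lemma nonneg_if_abs_diff_eq_diff:
  fixes s t :: real
  assumes "s \<noteq> t" and "\<bar>s\<bar> - \<bar>t\<bar> = s - t"
  shows "0 \<le> s"
  using assms by (cases "0 \<le> s"; cases "0 \<le> t") simp_all

lemma ave_solutions_difference:
  fixes A :: "real^'n^'n"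
  assumes "A *v x - vabs x = A *v y - vabs y"
  obtains d where "0 \<le> d" and "(A - mat 1 + diag_mat d) *v (x - y) = 0"
    and "d = 0 \<Longrightarrow> 0 \<le> x"
proof -
  define d :: "real^'n" where
    "d = (\<chi> i. if x $ i = y $ i then 1 else 1 - (\<bar>x $ i\<bar> - \<bar>y $ i\<bar>) / (x $ i - y $ i))"
  have slope: "d $ i * (x $ i - y $ i) = (x $ i - y $ i) - (\<bar>x $ i\<bar> - \<bar>y $ i\<bar>)" for i
    by (cases "x $ i = y $ i") (simp_all add: d_def field_simps)
  have "0 \<le> d"
    using abs_difference_quotient_le_1 by (simp add: d_def less_eq_vec_def)
  moreover have "(A - mat 1 + diag_mat d) *v (x - y) = 0"
  proof -
    have "((A - mat 1 + diag_mat d) *v (x - y)) $ i = 0" for i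
    proof -
      have "(A *v x) $ i - (A *v y) $ i = \<bar>x $ i\<bar> - \<bar>y $ i\<bar>"
        using arg_cong[OF assms, of "\<lambda>z. z $ i"] by (simp add: vabs_def)
      then show ?thesis
        using slope[of i, unfolded right_diff_distrib]
        by (simp add: matrix_vector_mult_add_rdistrib matrix_vector_mult_diff_rdistrib
            matrix_vector_mult_diff_distrib diag_mat_mult_vec)
    qed
    then show ?thesis
      by (simp add: vec_eq_iff)
  qed
  moreover have "0 \<le> x" if "d = 0"
    unfolding less_eq_vec_def
  proof
    fix i
    have "d $ i = 0"
      using that by simp
    then have "x $ i \<noteq> y $ i" and "\<bar>x $ i\<bar> - \<bar>y $ i\<bar> = x $ i - y $ i"
      using slope[of i] by (auto simp: d_def)
    then show "0 $ i \<le> x $ i"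
      by (simp add: nonneg_if_abs_diff_eq_diff)
  qed
  ultimately show thesis
    by (rule that)
qed

lemma ave_unique_solution_of_M_matrix:
  fixes A :: "real^'n^'n"
  assumes M: "M_matrix (A - mat 1)"
  shows "\<exists>!x. A *v x - vabs x = b"
proof -
  have shift_mono: "monotone_matrix (A - mat 1 + diag_mat d)" if "0 \<le> d" for d
    using M that by (rule M_matrix_add_diag_mat_monotone)
  define h where "h = matrix_inv (A - mat 1) *v vabs b"
  have "0 \<le> h"
    unfolding h_def using M by (intro nonneg_matrix_mult_vec_nonneg vabs_nonneg) (simp add: M_matrix_def)
  moreover have "b \<le> (A - mat 1) *v h"
    using M by (simp add: h_def M_matrix_def matrix_inv_mult_vec less_eq_vec_def vabs_def abs_ge_self)
  moreover have "monotone_matrix (A + mat 1)"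
    unfolding add_mat_one_eq_diag_shift by (rule shift_mono) (simp add: less_eq_vec_def)
  ultimately obtain x where "A *v x - vabs x = b"
    using ave_exists_of_supersolution by metis
  moreover have "x = y" if "A *v x - vabs x = b" and "A *v y - vabs y = b" for x y
  proof -
    have "A *v x - vabs x = A *v y - vabs y"
      using that by simp
    then obtain d where "0 \<le> d" and "(A - mat 1 + diag_mat d) *v (x - y) = 0"
      by (rule ave_solutions_difference)
    then have "x - y = 0"
      using shift_mono monotone_matrix_invertible invertible_iff_kernel_trivial by blast
    then show ?thesis
      by simp
  qed
  ultimately show ?thesis
    by blast
qed

lemma left_null_if_null_space_transpose_eq_span:
  fixes B :: "real^'n^'n"
  assumes "null_space (transpose B) = span {v}"
  shows "transpose B *v v = 0"
proof -
  have "v \<in> null_space (transpose B)"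
    unfolding assms by (rule span_base) simp
  then show ?thesis
    unfolding null_space_def by (rule CollectD)
qed

lemma singular_supersolution:
  fixes B :: "real^'n^'n"
  assumes v_pos: "\<forall>i. 0 < v $ i" and null: "null_space (transpose B) = span {v}"
    and shifts: "\<forall>d. 0 \<le> d \<and> d \<noteq> 0 \<longrightarrow> M_matrix (B + diag_mat d)"
    and vb: "v \<bullet> b < 0"
  obtains h where "0 \<le> h" and "b \<le> B *v h"
proof -
  have "v \<bullet> v > 0"
    using v_pos by (metis inner_gt_zero_iff less_irrefl zero_index)
  obtain a where a_pos: "\<forall>i. 0 < a $ i" and "B *v a = 0"
    using positive_kernel_vector v_pos left_null_if_null_space_transpose_eq_span[OF null] shifts
    by blast
  \<comment> \<open>the range of B is the orthogonal complement of v\<close>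
  define \<alpha> where "\<alpha> = (v \<bullet> b) / (v \<bullet> v)"
  have "\<forall>z \<in> null_space (transpose B). z \<bullet> (b - \<alpha> *\<^sub>R v) = 0"
    using null \<open>v \<bullet> v > 0\<close> by (auto simp: span_singleton \<alpha>_def inner_diff_right)
  then obtain w where "B *v w = b - \<alpha> *\<^sub>R v"
    using in_range_if_orthogonal_null_space_transpose by blast
  obtain K where "0 \<le> w + K *\<^sub>R a"
    using positive_vector_dominates[OF a_pos] .
  moreover have "b \<le> B *v (w + K *\<^sub>R a)"
  proof -
    have "B *v (w + K *\<^sub>R a) = b - \<alpha> *\<^sub>R v"
      using \<open>B *v w = b - \<alpha> *\<^sub>R v\<close> \<open>B *v a = 0\<close>
      by (simp add: matrix_vector_right_distrib matrix_vector_mult_scaleR)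
    moreover have "\<alpha> < 0"
      using vb \<open>v \<bullet> v > 0\<close> by (simp add: \<alpha>_def divide_neg_pos)
    ultimately show ?thesis
      using v_pos by (simp add: less_eq_vec_def mult_nonpos_nonneg less_imp_le)
  qed
  ultimately show thesis
    by (rule that)
qed

lemma ave_unique_solution_of_singular:
  fixes A :: "real^'n^'n"
  assumes v_pos: "\<forall>i. 0 < v $ i" and null: "null_space (transpose (A - mat 1)) = span {v}"
    and shifts: "\<forall>d. 0 \<le> d \<and> d \<noteq> 0 \<longrightarrow> M_matrix (A - mat 1 + diag_mat d)"
    and vb: "v \<bullet> b < 0"
  shows "\<exists>!x. A *v x - vabs x = b"
proof -
  obtain h where "0 \<le> h" and "b \<le> (A - mat 1) *v h"
    using singular_supersolution[OF v_pos null shifts vb] .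
  moreover have "monotone_matrix (A + mat 1)"
    unfolding add_mat_one_eq_diag_shift
    using shifts[rule_format, of "\<chi> i. 2"]
    by (simp add: M_matrix_imp_monotone_matrix less_eq_vec_def vec_eq_iff)
  ultimately obtain x where "A *v x - vabs x = b"
    using ave_exists_of_supersolution by blast
  moreover have "x = y" if "A *v x - vabs x = b" and "A *v y - vabs y = b" for x y
  proof -
    have "A *v x - vabs x = A *v y - vabs y"
      using that by simp
    then obtain d where "0 \<le> d" and d: "(A - mat 1 + diag_mat d) *v (x - y) = 0"
      and "d = 0 \<Longrightarrow> 0 \<le> x"
      using ave_solutions_difference by blast
    \<comment> \<open>d = 0 would make x a nonnegative solution of (A - I) x = b,
      but v is orthogonal to the range of A - I\<close>
    have "d \<noteq> 0"
    proof
      assume "d = 0"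
      then have "vabs x = x"
        using \<open>d = 0 \<Longrightarrow> 0 \<le> x\<close> by (simp add: vabs_def vec_eq_iff less_eq_vec_def)
      then have "(A - mat 1) *v x = b"
        using that(1) by (simp add: matrix_vector_mult_diff_rdistrib)
      then show False
        using inner_mult_vec_left_null[OF left_null_if_null_space_transpose_eq_span[OF null], of x] vb
        by simp
    qed
    then have "invertible (A - mat 1 + diag_mat d)"
      using shifts \<open>0 \<le> d\<close> by (simp add: M_matrix_def)
    then have "x - y = 0"
      using d invertible_iff_kernel_trivial by blast
    then show ?thesis
      by simp
  qed
  ultimately show ?thesis
    by blast
qed

theorem theorem3p2:
  fixes A :: "real^'n^'n" and b :: "real^'n"
  assumes "M_matrix (A - mat 1)
        \<or> (\<exists>v. (\<forall>i. v $ i > 0) \<and> null_space (transpose A - mat 1) = span {v}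
               \<and> (\<forall>d. (\<forall>i. d $ i \<ge> 0) \<and> d \<noteq> 0 \<longrightarrow> M_matrix (A - mat 1 + diag_mat d))
               \<and> v \<bullet> b < 0)"
  shows "\<exists>!x. A *v x - vabs x - b = 0"
  using assms
proof (elim disjE exE conjE)
  assume "M_matrix (A - mat 1)"
  then show ?thesis
    using ave_unique_solution_of_M_matrix by simp
next
  fix v :: "real^'n"
  assume "\<forall>i. v $ i > 0" and "null_space (transpose A - mat 1) = span {v}"
    and "\<forall>d. (\<forall>i. d $ i \<ge> 0) \<and> d \<noteq> 0 \<longrightarrow> M_matrix (A - mat 1 + diag_mat d)"
    and "v \<bullet> b < 0"
  moreover have "transpose A - mat 1 = transpose (A - mat 1)"
    by (simp add: vec_eq_iff transpose_def mat_def)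
  ultimately show ?thesis
    using ave_unique_solution_of_singular[of v A b] by (simp add: less_eq_vec_def)
qed

end
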